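(* Let $\mathcal{H}$ be a Hilbert space of dimension $d$ with $2\le d<\infty$ and let $\mathbf{W}=\{W_y:y\in Y\}$ be a unitary system on $\mathcal{H}$. (i) There is a unique maximal family $\mathcal{V}_{\mathbf{W}}=\{\mathbf{V}_\alpha:\alpha\in\Lambda\}$ of $\mathbf{W}$-MASS's such that $\mathbf{W}=\bigcup_{\alpha\in\Lambda}\mathbf{V}_\alpha$. If each $W_y$ in $\mathbf{W}$ has simple eigenvalues, then the $\mathbf{V}_\alpha$'s are mutually disjoint. (ii) Let $\mathbf{W}'$ be another unitary system on $\mathcal{H}$ and $\mathcal{V}_{\mathbf{W}'}=\{\mathbf{V}'_\beta:\beta\in\Lambda'\}$ the corresponding family of $\mathbf{W}'$-MASS's as in (i). Then for a unitary $V$ on $\mathcal{H}$, $\mathbf{W}$ is collectively unitarily equivalent to $\mathbf{W}'$ via $V$ if and only if there is a bijection $\alpha\mapsto\alpha'$ from $\Lambda$ onto $\Lambda'$ such that $\mathbf{V}_\alpha$ is collectively unitarily equivalent to $\mathbf{V}'_{\alpha'}$ via $V$ for every $\alpha\in\Lambda$.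
   Context: A unitary system (US) on $\mathcal{H}$ is a nonempty set $\mathbf{W}=\{W_y:y\in Y\}$ of unitary operators on $\mathcal{H}$ with $\operatorname{tr}W_y=0$ and $\operatorname{tr}(W_x^*W_y)=d\,\delta_{xy}$ for $x,y\in Y$. An abelian unitary system (AUS) is a unitary system whose members pairwise commute. A maximal abelian subsystem of $\mathbf{W}$ ($\mathbf{W}$-MASS) is a subset of $\mathbf{W}$ which is an AUS and is maximal (under inclusion) with this property. For sets $\mathcal{F},\mathcal{G}$ of operators on $\mathcal{H}$ and a unitary $V$, $\mathcal{F}$ is collectively unitarily equivalent to $\mathcal{G}$ via $V$ if $\mathcal{G}=\{V^*AV: A\in\mathcal{F}\}$. *)

theory Defs
  imports "Jordan_Normal_Form.Schur_Decomposition" "Jordan_Normal_Form.Char_Poly"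
begin

text \<open>Operators on the d-dimensional Hilbert space are complex d x d matrices
 (carrier_mat d d).  The adjoint is mat_adjoint.\<close>

definition mtrace :: "complex mat \<Rightarrow> complex" where
  "mtrace A = (\<Sum>i<dim_row A. A $$ (i, i))"

definition unitary_op :: "nat \<Rightarrow> complex mat \<Rightarrow> bool" where
  "unitary_op d U \<longleftrightarrow> U \<in> carrier_mat d d \<and> mat_adjoint U * U = 1\<^sub>m d \<and> U * mat_adjoint U = 1\<^sub>m d"

text \<open>A unitary system, given as the set of its members (the indexing y \<mapsto> W_y is
 necessarily injective because tr(W_y^* W_y) = d \<noteq> 0).\<close>
definition unitary_system :: "nat \<Rightarrow> complex mat set \<Rightarrow> bool" where
  "unitary_system d W \<longleftrightarrow> W \<noteq> {} \<and>
     (\<forall>U\<in>W. unitary_op d U \<and> mtrace U = 0) \<and>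
     (\<forall>A\<in>W. \<forall>B\<in>W. mtrace (mat_adjoint A * B) = (if A = B then of_nat d else 0))"

definition abelian_unitary_system :: "nat \<Rightarrow> complex mat set \<Rightarrow> bool" where
  "abelian_unitary_system d W \<longleftrightarrow> unitary_system d W \<and> (\<forall>A\<in>W. \<forall>B\<in>W. A * B = B * A)"

definition is_MASS :: "nat \<Rightarrow> complex mat set \<Rightarrow> complex mat set \<Rightarrow> bool" where
  "is_MASS d W V \<longleftrightarrow> V \<subseteq> W \<and> abelian_unitary_system d V \<and>
     (\<forall>V'. V \<subseteq> V' \<and> V' \<subseteq> W \<and> abelian_unitary_system d V' \<longrightarrow> V' = V)"

definition maximal_MASS_family :: "nat \<Rightarrow> complex mat set \<Rightarrow> complex mat set set \<Rightarrow> bool" where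
  "maximal_MASS_family d W F \<longleftrightarrow>
     (\<forall>V\<in>F. is_MASS d W V) \<and> \<Union>F = W \<and>
     (\<forall>G. (\<forall>V\<in>G. is_MASS d W V) \<and> \<Union>G = W \<and> F \<subseteq> G \<longrightarrow> G = F)"

text \<open>The family V_W of (i) (the unique maximal one).\<close>
definition MASS_family :: "nat \<Rightarrow> complex mat set \<Rightarrow> complex mat set set" where
  "MASS_family d W = (THE F. maximal_MASS_family d W F)"

definition coll_unit_equiv_via :: "complex mat set \<Rightarrow> complex mat set \<Rightarrow> complex mat \<Rightarrow> bool" where
  "coll_unit_equiv_via F G V \<longleftrightarrow> G = (\<lambda>A. mat_adjoint V * A * V) ` F"

definition simple_eigenvalues :: "complex mat \<Rightarrow> bool" where
  "simple_eigenvalues A \<longleftrightarrow> (\<forall>c. order c (char_poly A) \<le> 1)"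

end

theory Submission
  imports Defs "Jordan_Normal_Form.Jordan_Normal_Form_Existence"
begin

text \<open>The W-MASS's are the maximal nonempty commuting subsets of W, so any maximal family
  covering W must contain all of them; Zorn's lemma shows that they do cover W, hence the family of
  all W-MASS's is the unique maximal one.  If U has simple eigenvalues, it is similar to a diagonal
  matrix with distinct entries, whose commutant consists of diagonal matrices; so the commutant of U
  is commutative, and two W-MASS's sharing U would together form a larger commuting subset of W.
  Finally, conjugation by a unitary is an injective multiplicative map, hence it preserves and
  reflects commutation, and therefore maps the W-MASS's bijectively onto the W'-MASS's.\<close>

lemma conj_mat_mult:
  fixes P Q :: "'a :: semiring_1 mat"
  assumes P: "P \<in> carrier_mat n n" and Q: "Q \<in> carrier_mat n n" and PQ: "P * Q = 1\<^sub>m n"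
    and A: "A \<in> carrier_mat n n" and B: "B \<in> carrier_mat n n"
  shows "Q * (A * B) * P = (Q * A * P) * (Q * B * P)"
proof -
  have "(Q * A * P) * (Q * B * P) = (Q * A) * (P * Q) * (B * P)"
    using P Q A B by (simp add: assoc_mult_mat[of _ n n _ n _ n])
  also have "\<dots> = Q * (A * B) * P"
    using PQ P Q A B by (simp add: assoc_mult_mat[of _ n n _ n _ n] carrier_matD[OF B])
  finally show ?thesis by simp
qed

lemma conj_mat_cancel:
  fixes P Q :: "'a :: semiring_1 mat"
  assumes P: "P \<in> carrier_mat n n" and Q: "Q \<in> carrier_mat n n" and PQ: "P * Q = 1\<^sub>m n"
    and A: "A \<in> carrier_mat n n"
  shows "P * (Q * A * P) * Q = A"
proof -
  have "P * (Q * A * P) * Q = (P * Q) * A * (P * Q)"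
    using P Q A by (simp add: assoc_mult_mat[of _ n n _ n _ n])
  thus ?thesis using PQ by (simp add: carrier_matD[OF A])
qed

lemma inj_on_conj_mat:
  fixes P Q :: "'a :: semiring_1 mat"
  assumes "P \<in> carrier_mat n n" and "Q \<in> carrier_mat n n" and "P * Q = 1\<^sub>m n"
  shows "inj_on (\<lambda>A. Q * A * P) (carrier_mat n n)"
  by (rule inj_on_inverseI[of _ "\<lambda>A. P * A * Q"]) (use conj_mat_cancel assms in blast)

lemma conj_mat_commute_iff:
  fixes P Q :: "'a :: semiring_1 mat"
  assumes P: "P \<in> carrier_mat n n" and Q: "Q \<in> carrier_mat n n" and PQ: "P * Q = 1\<^sub>m n"
    and A: "A \<in> carrier_mat n n" and B: "B \<in> carrier_mat n n"
  shows "(Q * A * P) * (Q * B * P) = (Q * B * P) * (Q * A * P) \<longleftrightarrow> A * B = B * A"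
  using conj_mat_mult[OF P Q PQ] inj_onD[OF inj_on_conj_mat[OF P Q PQ]] A B
  by (metis mult_carrier_mat)

lemma commute_mat_diag_distinct_imp_diag:
  fixes f :: "nat \<Rightarrow> 'a :: idom"
  assumes inj: "inj_on f {..<n}" and X: "X \<in> carrier_mat n n"
    and comm: "X * mat_diag n f = mat_diag n f * X"
  shows "X = mat_diag n (\<lambda>i. X $$ (i, i))"
proof (rule eq_matI)
  fix i j assume "i < dim_row (mat_diag n (\<lambda>i. X $$ (i, i)))"
    and "j < dim_col (mat_diag n (\<lambda>i. X $$ (i, i)))"
  hence i: "i < n" and j: "j < n" by (auto simp: mat_diag_def)
  have "(X * mat_diag n f) $$ (i, j) = (mat_diag n f * X) $$ (i, j)" using comm by simp
  hence "X $$ (i, j) * (f j - f i) = 0"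
    using i j by (simp add: mat_diag_mult_left[OF X] mat_diag_mult_right[OF X] algebra_simps)
  moreover have "i \<noteq> j \<Longrightarrow> f i \<noteq> f j" using inj i j by (auto dest: inj_onD)
  ultimately show "X $$ (i, j) = mat_diag n (\<lambda>i. X $$ (i, i)) $$ (i, j)"
    using i j by (cases "i = j") (auto simp: mat_diag_def)
qed (use X in \<open>auto simp: mat_diag_def\<close>)

lemma jordan_matrix_all_blocks_one:
  "jordan_matrix (map (\<lambda>a. (1, a)) as) = mat_diag (length as) (\<lambda>i. as ! i)"
proof (induct as)
  case Nil
  show ?case by (rule eq_matI) (auto simp: mat_diag_def)
next
  case (Cons a as)
  have "sum_list (map fst (map (\<lambda>a. (1 :: nat, a)) as)) = length as" by (induct as) auto
  thus ?case unfolding list.map jordan_matrix_Cons Cons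
    by (intro eq_matI) (auto simp: mat_diag_def nth_Cons')
qed

text \<open>By the multiplicity bound on Jordan blocks, all blocks of a Jordan normal form of U have size
  one, and the diagonal entries are distinct because each occurs with its algebraic multiplicity.\<close>
lemma simple_eigenvalues_similar_distinct_diag:
  fixes U :: "complex mat"
  assumes U: "U \<in> carrier_mat n n" and simple: "simple_eigenvalues U"
  shows "\<exists>f. inj_on f {..<n} \<and> similar_mat U (mat_diag n f)"
proof -
  obtain as where "char_poly U = (\<Prod>a\<leftarrow>as. [:- a, 1:])"
    using char_poly_factorized[OF U] by auto
  from jordan_nf_exists[OF U this] obtain n_as where jnf: "jordan_nf U n_as" by blast
  have order_le_1: "order a (char_poly U) \<le> 1" for a
    using simple unfolding simple_eigenvalues_def by blast
  have "k = 1" if "(k, a) \<in> set n_as" for k a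
    using jordan_nf_block_size_order_bound[OF jnf that] order_le_1[of a] jnf that
    unfolding jordan_nf_def by force
  hence n_as: "n_as = map (\<lambda>a. (1, a)) (map snd n_as)" by (induct n_as) auto
  define es where "es = map snd n_as"
  have count_le_1: "count (mset es) a \<le> 1" for a
  proof -
    have "count (mset es) a = sum_list (map fst (filter (\<lambda>na. snd na = a) (map (\<lambda>a. (1, a)) es)))"
      by (induct es) auto
    also have "\<dots> = order a (char_poly U)"
      using jordan_nf_order[OF jnf] n_as unfolding es_def by metis
    finally show ?thesis using order_le_1 by simp
  qed
  have "count (mset es) a = (if a \<in> set es then 1 else 0)" for a
    using count_le_1[of a] count_mset_0_iff[of es a] by (auto simp: le_Suc_eq)
  hence "distinct es" unfolding distinct_count_atmost_1 by blast
  hence inj: "inj_on (\<lambda>i. es ! i) {..<length es}" by (simp add: inj_on_def nth_eq_iff_index_eq)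
  have sim: "similar_mat U (mat_diag (length es) (\<lambda>i. es ! i))"
    using jnf arg_cong[OF n_as, of jordan_matrix]
    unfolding jordan_nf_def es_def jordan_matrix_all_blocks_one by simp
  have "length es = n"
  proof -
    obtain k where Uk: "U \<in> carrier_mat k k"
      and Dk: "mat_diag (length es) (\<lambda>i. es ! i) \<in> carrier_mat k k"
      using similar_matD[OF sim] by blast
    have "length es = k" using carrier_matD(1)[OF Dk] by (simp add: mat_diag_def)
    moreover have "k = n" using carrier_matD(1)[OF Uk] carrier_matD(1)[OF U] by simp
    ultimately show ?thesis by simp
  qed
  thus ?thesis using inj sim by blast
qed

lemma commute_simple_eigenvalues_commute:
  fixes U X Y :: "complex mat"
  assumes U: "U \<in> carrier_mat n n" and simple: "simple_eigenvalues U"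
    and X: "X \<in> carrier_mat n n" and Y: "Y \<in> carrier_mat n n"
    and XU: "X * U = U * X" and YU: "Y * U = U * Y"
  shows "X * Y = Y * X"
proof -
  obtain f where inj: "inj_on f {..<n}" and sim: "similar_mat U (mat_diag n f)"
    using simple_eigenvalues_similar_distinct_diag[OF U simple] by blast
  from similar_matD[OF sim] obtain k P Q where carr: "{U, mat_diag n f, P, Q} \<subseteq> carrier_mat k k"
    and PQ: "P * Q = 1\<^sub>m k" and QP: "Q * P = 1\<^sub>m k" and UPQ: "U = P * mat_diag n f * Q"
    by blast
  have "k = n" using carr U by auto
  with carr PQ QP have P: "P \<in> carrier_mat n n" and Q: "Q \<in> carrier_mat n n"
    and PQ: "P * Q = 1\<^sub>m n" and QP: "Q * P = 1\<^sub>m n" by auto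
  have J: "Q * U * P = mat_diag n f"
    using conj_mat_cancel[OF Q P QP, of "mat_diag n f"] UPQ by simp
  have diag: "Q * Z * P = mat_diag n (\<lambda>i. (Q * Z * P) $$ (i, i))"
    if Z: "Z \<in> carrier_mat n n" and ZU: "Z * U = U * Z" for Z
    using commute_mat_diag_distinct_imp_diag[OF inj, of "Q * Z * P"]
      conj_mat_commute_iff[OF P Q PQ Z U] ZU P Q Z J by simp
  have "(Q * X * P) * (Q * Y * P) = (Q * Y * P) * (Q * X * P)"
    by (subst (1 2) diag[OF X XU], subst (1 2) diag[OF Y YU]) (simp add: mult.commute)
  thus ?thesis using conj_mat_commute_iff[OF P Q PQ X Y] by simp
qed

definition commuting_set :: "'a :: semiring_0 mat set \<Rightarrow> bool" where
  "commuting_set S \<longleftrightarrow> (\<forall>A\<in>S. \<forall>B\<in>S. A * B = B * A)"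

lemma unitary_system_carrier: "unitary_system d W \<Longrightarrow> W \<subseteq> carrier_mat d d"
  unfolding unitary_system_def unitary_op_def by blast

lemma abelian_unitary_system_subset_iff:
  assumes "unitary_system d W" and "S \<subseteq> W"
  shows "abelian_unitary_system d S \<longleftrightarrow> S \<noteq> {} \<and> commuting_set S"
  using assms unfolding abelian_unitary_system_def unitary_system_def commuting_set_def by blast

lemma is_MASS_iff:
  assumes "unitary_system d W"
  shows "is_MASS d W S \<longleftrightarrow> S \<subseteq> W \<and> S \<noteq> {} \<and> commuting_set S \<and>
     (\<forall>S'. S \<subseteq> S' \<and> S' \<subseteq> W \<and> commuting_set S' \<longrightarrow> S' = S)"
  unfolding is_MASS_def using abelian_unitary_system_subset_iff[OF assms] by blast

lemma ex_MASS_containing: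
  assumes W: "unitary_system d W" and U: "U \<in> W"
  shows "\<exists>S. is_MASS d W S \<and> U \<in> S"
proof -
  define \<A> where "\<A> = {S. U \<in> S \<and> S \<subseteq> W \<and> commuting_set S}"
  have "{U} \<in> \<A>" unfolding \<A>_def commuting_set_def using U by simp
  moreover have "\<Union>\<C> \<in> \<A>" if "\<C> \<noteq> {}" and ch: "subset.chain \<A> \<C>" for \<C>
  proof -
    have "commuting_set (\<Union>\<C>)" unfolding commuting_set_def
    proof (intro ballI)
      fix A B assume "A \<in> \<Union>\<C>" "B \<in> \<Union>\<C>"
      then obtain S T where ST: "S \<in> \<C>" "T \<in> \<C>" "A \<in> S" "B \<in> T" by blast
      have "S \<subseteq> T \<or> T \<subseteq> S" and "commuting_set S" and "commuting_set T"
        using ch ST unfolding subset_chain_def \<A>_def by auto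
      thus "A * B = B * A" using ST unfolding commuting_set_def by blast
    qed
    thus ?thesis using that unfolding subset_chain_def \<A>_def by auto
  qed
  ultimately obtain M where M: "M \<in> \<A>" and max: "\<And>X. X \<in> \<A> \<Longrightarrow> M \<subseteq> X \<Longrightarrow> X = M"
    using subset_Zorn_nonempty[of \<A>] by blast
  have "is_MASS d W M" unfolding is_MASS_iff[OF W]
  proof (intro conjI allI impI)
    show "M \<subseteq> W" "M \<noteq> {}" "commuting_set M" using M unfolding \<A>_def by auto
    show "S' = M" if "M \<subseteq> S' \<and> S' \<subseteq> W \<and> commuting_set S'" for S'
      using max[of S'] that M unfolding \<A>_def by blast
  qed
  thus ?thesis using M unfolding \<A>_def by blast
qed

lemma maximal_MASS_family_iff:
  assumes W: "unitary_system d W"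
  shows "maximal_MASS_family d W F \<longleftrightarrow> F = {S. is_MASS d W S}"
proof
  assume "maximal_MASS_family d W F"
  hence mass: "\<forall>V\<in>F. is_MASS d W V" and cover: "\<Union>F = W"
    and max: "\<And>G. (\<forall>V\<in>G. is_MASS d W V) \<and> \<Union>G = W \<and> F \<subseteq> G \<Longrightarrow> G = F"
    unfolding maximal_MASS_family_def by blast+
  have "\<Union>{S. is_MASS d W S} \<subseteq> W" unfolding is_MASS_def by blast
  hence "F \<union> {S. is_MASS d W S} = F" using mass cover by (intro max) auto
  thus "F = {S. is_MASS d W S}" using mass by blast
next
  assume F: "F = {S. is_MASS d W S}"
  have "\<Union>F = W" using ex_MASS_containing[OF W] unfolding F is_MASS_def by blast
  thus "maximal_MASS_family d W F" unfolding maximal_MASS_family_def F by blast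
qed

lemma MASS_family_eq:
  assumes "unitary_system d W"
  shows "MASS_family d W = {S. is_MASS d W S}"
  unfolding MASS_family_def maximal_MASS_family_iff[OF assms] by simp

lemma Union_MASS_family:
  assumes "unitary_system d W"
  shows "\<Union>(MASS_family d W) = W"
  using maximal_MASS_family_iff[OF assms] MASS_family_eq[OF assms]
  unfolding maximal_MASS_family_def by blast

lemma MASS_family_disjoint:
  assumes W: "unitary_system d W" and simple: "\<forall>U\<in>W. simple_eigenvalues U"
    and A: "A \<in> MASS_family d W" and B: "B \<in> MASS_family d W" and "A \<noteq> B"
  shows "A \<inter> B = {}"
proof (rule ccontr)
  assume "A \<inter> B \<noteq> {}"
  then obtain U where UA: "U \<in> A" and UB: "U \<in> B" by blast
  from A B have AW: "A \<subseteq> W" and BW: "B \<subseteq> W" and "commuting_set A" "commuting_set B"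
    unfolding MASS_family_eq[OF W] is_MASS_iff[OF W] by auto
  hence commU: "X * U = U * X" if "X \<in> A \<union> B" for X
    using that UA UB unfolding commuting_set_def by blast
  have carr: "A \<union> B \<subseteq> carrier_mat d d" using AW BW unitary_system_carrier[OF W] by blast
  have "commuting_set (A \<union> B)" unfolding commuting_set_def
  proof (intro ballI)
    fix X Y assume X: "X \<in> A \<union> B" and Y: "Y \<in> A \<union> B"
    have "U \<in> W" using UA AW by blast
    with carr UA simple have "U \<in> carrier_mat d d" and "simple_eigenvalues U" by auto
    thus "X * Y = Y * X"
      using commute_simple_eigenvalues_commute commU[OF X] commU[OF Y] X Y carr by blast
  qed
  hence "A \<union> B = A" and "A \<union> B = B"
    using A B AW BW unfolding MASS_family_eq[OF W] is_MASS_iff[OF W] by auto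
  with \<open>A \<noteq> B\<close> show False by simp
qed

lemma is_MASS_image_iff:
  assumes W: "unitary_system d W" and W': "unitary_system d (\<phi> ` W)" and inj: "inj_on \<phi> W"
    and comm: "\<And>A B. A \<in> W \<Longrightarrow> B \<in> W \<Longrightarrow> \<phi> A * \<phi> B = \<phi> B * \<phi> A \<longleftrightarrow> A * B = B * A"
    and S: "S \<subseteq> W"
  shows "is_MASS d (\<phi> ` W) (\<phi> ` S) \<longleftrightarrow> is_MASS d W S"
proof -
  have commuting_image: "commuting_set (\<phi> ` T) \<longleftrightarrow> commuting_set T" if "T \<subseteq> W" for T
    using that unfolding commuting_set_def by (simp add: comm subset_iff)
  have image_subset: "\<phi> ` S \<subseteq> \<phi> ` T \<longleftrightarrow> S \<subseteq> T" if "T \<subseteq> W" for T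
    using inj_on_image_mem_iff[OF inj] S that by blast
  have image_eq: "\<phi> ` T = \<phi> ` S \<longleftrightarrow> T = S" if "T \<subseteq> W" for T
    using inj_on_image_eq_iff[OF inj that S] .
  have max_iff: "(\<forall>S'. \<phi> ` S \<subseteq> S' \<and> S' \<subseteq> \<phi> ` W \<and> commuting_set S' \<longrightarrow> S' = \<phi> ` S) \<longleftrightarrow>
      (\<forall>T. S \<subseteq> T \<and> T \<subseteq> W \<and> commuting_set T \<longrightarrow> T = S)"
  proof (intro iffI allI impI)
    fix T assume max: "\<forall>S'. \<phi> ` S \<subseteq> S' \<and> S' \<subseteq> \<phi> ` W \<and> commuting_set S' \<longrightarrow> S' = \<phi> ` S"
      and T: "S \<subseteq> T \<and> T \<subseteq> W \<and> commuting_set T"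
    have "\<phi> ` T = \<phi> ` S"
      using T commuting_image[of T] by (intro max[rule_format]) blast
    thus "T = S" using image_eq T by blast
  next
    fix S' assume max: "\<forall>T. S \<subseteq> T \<and> T \<subseteq> W \<and> commuting_set T \<longrightarrow> T = S"
      and S': "\<phi> ` S \<subseteq> S' \<and> S' \<subseteq> \<phi> ` W \<and> commuting_set S'"
    then obtain T where T: "T \<subseteq> W" and S'_eq: "S' = \<phi> ` T" by (auto simp: subset_image_iff)
    have "S \<subseteq> T" using S' S'_eq image_subset[OF T] by blast
    moreover have "commuting_set T" using S' S'_eq commuting_image[OF T] by blast
    ultimately show "S' = \<phi> ` S" using max T S'_eq by blast
  qed
  have "is_MASS d (\<phi> ` W) (\<phi> ` S) \<longleftrightarrow> \<phi> ` S \<subseteq> \<phi> ` W \<and> \<phi> ` S \<noteq> {} \<and> commuting_set (\<phi> ` S) \<and>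
      (\<forall>S'. \<phi> ` S \<subseteq> S' \<and> S' \<subseteq> \<phi> ` W \<and> commuting_set S' \<longrightarrow> S' = \<phi> ` S)"
    by (rule is_MASS_iff[OF W'])
  also have "\<dots> \<longleftrightarrow> S \<subseteq> W \<and> S \<noteq> {} \<and> commuting_set S \<and>
      (\<forall>T. S \<subseteq> T \<and> T \<subseteq> W \<and> commuting_set T \<longrightarrow> T = S)"
    unfolding max_iff commuting_image[OF S] using S by blast
  also have "\<dots> \<longleftrightarrow> is_MASS d W S" by (rule is_MASS_iff[OF W, symmetric])
  finally show ?thesis .
qed

lemma MASS_family_image:
  assumes W: "unitary_system d W" and W': "unitary_system d (\<phi> ` W)" and inj: "inj_on \<phi> W"
    and comm: "\<And>A B. A \<in> W \<Longrightarrow> B \<in> W \<Longrightarrow> \<phi> A * \<phi> B = \<phi> B * \<phi> A \<longleftrightarrow> A * B = B * A"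
  shows "MASS_family d (\<phi> ` W) = image \<phi> ` MASS_family d W"
proof -
  have MASS_image_iff: "is_MASS d (\<phi> ` W) (\<phi> ` S) \<longleftrightarrow> is_MASS d W S" if "S \<subseteq> W" for S
    by (rule is_MASS_image_iff[OF W W' inj]) (simp_all add: comm that)
  have "is_MASS d (\<phi> ` W) S' \<longleftrightarrow> S' \<in> image \<phi> ` {S. is_MASS d W S}" for S'
  proof
    assume S': "is_MASS d (\<phi> ` W) S'"
    hence "S' \<subseteq> \<phi> ` W" unfolding is_MASS_def by blast
    then obtain T where T: "T \<subseteq> W" and S'_eq: "S' = \<phi> ` T" by (auto simp: subset_image_iff)
    hence "is_MASS d W T" using S' MASS_image_iff[OF T] by simp
    thus "S' \<in> image \<phi> ` {S. is_MASS d W S}" using S'_eq by blast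
  next
    assume "S' \<in> image \<phi> ` {S. is_MASS d W S}"
    then obtain S where S: "is_MASS d W S" and S'_eq: "S' = \<phi> ` S" by blast
    moreover have "S \<subseteq> W" using S unfolding is_MASS_def by blast
    ultimately show "is_MASS d (\<phi> ` W) S'" using MASS_image_iff by simp
  qed
  thus ?thesis unfolding MASS_family_eq[OF W] MASS_family_eq[OF W'] by blast
qed

lemma unitary_op_adjoint:
  assumes "unitary_op d V"
  shows "mat_adjoint V \<in> carrier_mat d d" and "V * mat_adjoint V = 1\<^sub>m d"
  using assms unfolding unitary_op_def mat_adjoint_def by auto

lemma coll_unit_equiv_via_iff_MASS_family:
  assumes W: "unitary_system d W" and W': "unitary_system d W'" and V: "unitary_op d V"
  shows "coll_unit_equiv_via W W' V \<longleftrightarrow>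
    (\<exists>f. bij_betw f (MASS_family d W) (MASS_family d W') \<and>
         (\<forall>A\<in>MASS_family d W. coll_unit_equiv_via A (f A) V))"
proof -
  define \<phi> where "\<phi> A = mat_adjoint V * A * V" for A
  have Vc: "V \<in> carrier_mat d d" using V unfolding unitary_op_def by blast
  note conj = unitary_op_adjoint[OF V]
  have Wc: "W \<subseteq> carrier_mat d d" using unitary_system_carrier[OF W] .
  have inj: "inj_on \<phi> (carrier_mat d d)" unfolding \<phi>_def using inj_on_conj_mat[OF Vc conj] .
  show ?thesis unfolding coll_unit_equiv_via_def \<phi>_def[symmetric]
  proof
    assume W'_eq: "W' = \<phi> ` W"
    have comm: "\<phi> A * \<phi> B = \<phi> B * \<phi> A \<longleftrightarrow> A * B = B * A" if "A \<in> W" "B \<in> W" for A B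
      unfolding \<phi>_def using conj_mat_commute_iff[OF Vc conj] that Wc by blast
    have "MASS_family d W' = image \<phi> ` MASS_family d W"
      unfolding W'_eq using MASS_family_image W W'[unfolded W'_eq] inj_on_subset[OF inj Wc] comm
      by blast
    moreover have "inj_on (image \<phi>) (MASS_family d W)"
      using Union_MASS_family[OF W] inj_on_subset[OF inj Wc] by (intro inj_on_image) simp
    ultimately show "\<exists>f. bij_betw f (MASS_family d W) (MASS_family d W') \<and>
        (\<forall>A\<in>MASS_family d W. f A = \<phi> ` A)" unfolding bij_betw_def by blast
  next
    assume "\<exists>f. bij_betw f (MASS_family d W) (MASS_family d W') \<and>
        (\<forall>A\<in>MASS_family d W. f A = \<phi> ` A)"
    then obtain f where f_onto: "f ` MASS_family d W = MASS_family d W'"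
      and f_eq: "\<forall>A\<in>MASS_family d W. f A = \<phi> ` A" unfolding bij_betw_def by blast
    have "f ` MASS_family d W = image \<phi> ` MASS_family d W"
      by (rule image_cong[OF refl]) (use f_eq in blast)
    hence "MASS_family d W' = image \<phi> ` MASS_family d W" using f_onto by simp
    hence "\<Union>(MASS_family d W') = \<phi> ` \<Union>(MASS_family d W)" by (simp add: image_Union)
    thus "W' = \<phi> ` W" unfolding Union_MASS_family[OF W] Union_MASS_family[OF W'] .
  qed
qed

theorem theorem2p8:
  fixes d :: nat and W :: "complex mat set"
  assumes "2 \<le> d" and "unitary_system d W"
  shows "(\<exists>!F. maximal_MASS_family d W F)
    \<and> ((\<forall>U\<in>W. simple_eigenvalues U) \<longrightarrow>
         (\<forall>A\<in>MASS_family d W. \<forall>B\<in>MASS_family d W. A \<noteq> B \<longrightarrow> A \<inter> B = {}))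
    \<and> (\<forall>W' V. unitary_system d W' \<longrightarrow> unitary_op d V \<longrightarrow>
         (coll_unit_equiv_via W W' V \<longleftrightarrow>
          (\<exists>f. bij_betw f (MASS_family d W) (MASS_family d W') \<and>
               (\<forall>A\<in>MASS_family d W. coll_unit_equiv_via A (f A) V))))"
proof (intro conjI allI impI ballI)
  show "\<exists>!F. maximal_MASS_family d W F" using maximal_MASS_family_iff[OF assms(2)] by simp
qed (simp_all add: MASS_family_disjoint[OF assms(2)] coll_unit_equiv_via_iff_MASS_family[OF assms(2)])

end
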